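(* Let $\mathcal{X}\subseteq\mathbb{R}^d$ be closed and convex, let $f:\mathcal{X}\to\mathbb{R}$ be convex and continuously differentiable with a minimizer $x^\ast\in\mathcal{X}$, and let $h:\mathcal{X}\to\mathbb{R}$ be strictly convex and continuously differentiable. Let $\alpha,\beta:\mathbb{R}\to\mathbb{R}$ be smooth, with $\beta$ nondecreasing and $\dot\beta_t\le e^{\alpha_t}$ for all $t$. Let $t\mapsto X_t\in\mathcal{X}$ be a differentiable curve such that $Z_t:=X_t+e^{-\alpha_t}\dot X_t\in\mathcal{X}$, $t\mapsto Z_t$ and $t\mapsto\nabla h(Z_t)$ are differentiable, and $$\frac{d}{dt}\nabla h(Z_t)=-e^{\alpha_t+\beta_t}\nabla f(X_t).$$ Then, for $x=x^\ast$, $$\frac{d}{dt}D_h(x,Z_t)\le-\frac{d}{dt}\Big\{e^{\beta_t}\big(f(X_t)-f(x)\big)\Big\};$$ if moreover $\dot\beta_t=e^{\alpha_t}$ for all $t$, this inequality holds for every $x\in\mathcal{X}$. Consequently $\mathcal{E}_t=D_h(x,Z_t)+e^{\beta_t}(f(X_t)-f(x))$ is nonincreasing in $t$ for $x=x^\ast$ (and for every $x\in\mathcal{X}$ when $\dot\beta_t=e^{\alpha_t}$).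
   Context: $D_h(y,x)=h(y)-h(x)-\langle\nabla h(x),y-x\rangle$ is the Bregman divergence of $h$; $\|\cdot\|$ is the Euclidean norm. *)

theory Defs
  imports "HOL-Analysis.Analysis"
begin

definition bregman :: "('a::real_inner \<Rightarrow> real) \<Rightarrow> ('a \<Rightarrow> 'a) \<Rightarrow> 'a \<Rightarrow> 'a \<Rightarrow> real" where
  "bregman h gh y x = h y - h x - inner (gh x) (y - x)"

definition strictly_convex_on :: "'a::real_vector set \<Rightarrow> ('a \<Rightarrow> real) \<Rightarrow> bool" where
  "strictly_convex_on S f \<longleftrightarrow>
     (\<forall>x\<in>S. \<forall>y\<in>S. x \<noteq> y \<longrightarrow> (\<forall>u::real. 0 < u \<and> u < 1 \<longrightarrow>
        f ((1 - u) *\<^sub>R x + u *\<^sub>R y) < (1 - u) * f x + u * f y))"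

definition smooth_real :: "(real \<Rightarrow> real) \<Rightarrow> bool" where
  "smooth_real g \<longleftrightarrow> (\<forall>n t. ((deriv ^^ n) g) differentiable (at t))"

definition C1_grad_on :: "'a::euclidean_space set \<Rightarrow> ('a \<Rightarrow> real) \<Rightarrow> ('a \<Rightarrow> 'a) \<Rightarrow> bool" where
  "C1_grad_on S f g \<longleftrightarrow>
     (\<forall>x\<in>S. (f has_derivative (\<lambda>v. inner (g x) v)) (at x within S)) \<and> continuous_on S g"

end

theory Submission imports Defs begin

text \<open>Along a solution \<nabla>h(Z) moves in the direction -\<nabla>f(X), so the derivative of D_h(x, Z)
  is e^(\<alpha>+\<beta>) \<langle>\<nabla>f(X), x - Z\<rangle>. Writing x - Z = (x - X) - e^(-\<alpha>) X', the X' part cancels the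
  term e^\<beta> \<langle>\<nabla>f(X), X'\<rangle> in the derivative of e^\<beta> (f(X) - f(x)), and the gradient inequality
  \<langle>\<nabla>f(X), x - X\<rangle> \<le> f(x) - f(X) bounds the rest. What remains is e^\<beta> (f(X) - f(x)) (\<beta>' - e^\<alpha>),
  which is \<le> 0 for x = x* when \<beta>' \<le> e^\<alpha>, and vanishes for every x when \<beta>' = e^\<alpha>.\<close>

lemma convex_on_gradient_inequality:
  fixes f :: "'a::real_inner \<Rightarrow> real"
  assumes S: "convex S" and f: "convex_on S f"
    and deriv: "(f has_derivative (\<lambda>v. inner g v)) (at y within S)"
    and y: "y \<in> S" and x: "x \<in> S"
  shows "inner g (x - y) \<le> f x - f y"
proof -
  define p where "p u = y + u *\<^sub>R (x - y)" for u :: real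
  have p_convex_comb: "p u = (1 - u) *\<^sub>R y + u *\<^sub>R x" for u
    by (simp add: p_def algebra_simps)
  have p_in_S: "p ` {0..1} \<subseteq> S"
    using S x y by (auto simp: p_convex_comb intro: convexD_alt)
  have "(p has_derivative (\<lambda>u. u *\<^sub>R (x - y))) (at 0 within {0..1})"
    unfolding p_def by (auto intro!: derivative_eq_intros)
  then have "((\<lambda>u. f (p u)) has_derivative (\<lambda>u. inner g (u *\<^sub>R (x - y)))) (at 0 within {0..1})"
    by (rule has_derivative_in_compose) (use deriv has_derivative_subset p_in_S in \<open>auto simp: p_def\<close>)
  then have "((\<lambda>u. f (p u)) has_field_derivative inner g (x - y)) (at 0 within {0..1})"
    unfolding has_field_derivative_def by (rule has_derivative_eq_rhs) (simp add: fun_eq_iff)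
  then have slope_limit: "((\<lambda>u. (f (p u) - f y) / u) \<longlongrightarrow> inner g (x - y)) (at_right 0)"
    by (simp add: has_field_derivative_iff at_within_Icc_at_right p_def)
  have "eventually (\<lambda>u. (f (p u) - f y) / u \<le> f x - f y) (at_right (0::real))"
    using eventually_at_right_real[OF zero_less_one]
  proof (rule eventually_mono)
    fix u :: real assume u: "u \<in> {0<..<1}"
    then have "f (p u) \<le> (1 - u) * f y + u * f x"
      using convex_onD[OF f, of u y x] x y by (simp add: p_convex_comb)
    then have "f (p u) - f y \<le> u * (f x - f y)"
      by (simp add: algebra_simps)
    then show "(f (p u) - f y) / u \<le> f x - f y"
      using u by (simp add: divide_le_eq mult.commute)
  qed
  then show ?thesis
    by (rule tendsto_le[OF trivial_limit_at_right_real tendsto_const slope_limit])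
qed

lemma has_real_derivative_comp_gradient:
  fixes f :: "'a::real_inner \<Rightarrow> real"
  assumes "(f has_derivative (\<lambda>v. inner g v)) (at (X t) within S)"
    and "range X \<subseteq> S" and "(X has_vector_derivative V) (at t)"
  shows "((\<lambda>s. f (X s)) has_real_derivative inner g V) (at t)"
proof -
  have "(f has_derivative (\<lambda>v. inner g v)) (at (X t) within range X)"
    using assms(1,2) by (rule has_derivative_subset)
  with assms(3) have "((\<lambda>s. f (X s)) has_derivative (\<lambda>u. inner g (u *\<^sub>R V))) (at t)"
    unfolding has_vector_derivative_def by (rule has_derivative_in_compose)
  then show ?thesis
    unfolding has_field_derivative_def by (rule has_derivative_eq_rhs) (simp add: fun_eq_iff)
qed

text \<open>The terms \<langle>\<nabla>h(Z), Z'\<rangle> coming from h(Z) and from the inner product cancel, so only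
  the derivative of \<nabla>h(Z) survives.\<close>
lemma has_real_derivative_bregman_comp:
  fixes h :: "'a::real_inner \<Rightarrow> real"
  assumes h: "(h has_derivative (\<lambda>v. inner (gh (Z t)) v)) (at (Z t) within S)"
    and Z: "range Z \<subseteq> S" "Z differentiable (at t)"
    and ghZ: "((\<lambda>s. gh (Z s)) has_vector_derivative G) (at t)"
  shows "((\<lambda>s. bregman h gh x (Z s)) has_real_derivative - inner G (x - Z t)) (at t)"
proof -
  define Z' where "Z' = vector_derivative Z (at t)"
  have Z': "(Z has_vector_derivative Z') (at t)"
    using Z(2) by (simp add: Z'_def vector_derivative_works)
  have "((\<lambda>s. h (Z s)) has_derivative (\<lambda>u. inner (gh (Z t)) Z' * u)) (at t)"
    using has_real_derivative_comp_gradient[OF h Z(1) Z'] by (simp add: has_field_derivative_def)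
  moreover have "((\<lambda>s. inner (gh (Z s)) (x - Z s)) has_derivative
      (\<lambda>u. inner (gh (Z t)) (- (u *\<^sub>R Z')) + inner (u *\<^sub>R G) (x - Z t))) (at t)"
    using ghZ Z' unfolding has_vector_derivative_def
    by (auto intro!: derivative_eq_intros)
  ultimately have "((\<lambda>s. h x - h (Z s) - inner (gh (Z s)) (x - Z s)) has_derivative
      (\<lambda>u. 0 - inner (gh (Z t)) Z' * u
            - (inner (gh (Z t)) (- (u *\<^sub>R Z')) + inner (u *\<^sub>R G) (x - Z t)))) (at t)"
    by (intro has_derivative_diff has_derivative_const)
  then show ?thesis
    unfolding has_field_derivative_def bregman_def
    by (rule has_derivative_eq_rhs) (simp add: fun_eq_iff algebra_simps)
qed

lemma antimono_if_derivative_nonpos: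
  fixes g :: "real \<Rightarrow> real"
  assumes "\<And>t. \<exists>D. (g has_real_derivative D) (at t) \<and> D \<le> 0"
  shows "antimono g"
  using assms by (auto simp: antimono_def intro: DERIV_nonpos_imp_nonincreasing)

context
  fixes S :: "'a::euclidean_space set"
    and f h :: "'a \<Rightarrow> real" and gf gh :: "'a \<Rightarrow> 'a"
    and \<alpha> \<beta> :: "real \<Rightarrow> real"
    and X X' Z :: "real \<Rightarrow> 'a"
  assumes S: "convex S"
    and f: "convex_on S f" "C1_grad_on S f gf"
    and h: "C1_grad_on S h gh"
    and \<beta>_diff: "\<forall>t. \<beta> differentiable (at t)"
    and X_deriv: "\<forall>t. (X has_vector_derivative X' t) (at t)"
    and XS: "\<forall>t. X t \<in> S"
    and Z_def: "\<forall>t. Z t = X t + exp (- \<alpha> t) *\<^sub>R X' t"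
    and ZS: "\<forall>t. Z t \<in> S"
    and Z_diff: "\<forall>t. Z differentiable (at t)"
    and ghZ: "\<forall>t. ((\<lambda>s. gh (Z s)) has_vector_derivative
                   (- exp (\<alpha> t + \<beta> t)) *\<^sub>R gf (X t)) (at t)"
begin

lemma lyapunov_derivative_bound:
  assumes x: "x \<in> S"
  shows "\<exists>D E. ((\<lambda>s. bregman h gh x (Z s)) has_real_derivative D) (at t)
             \<and> ((\<lambda>s. exp (\<beta> s) * (f (X s) - f x)) has_real_derivative E) (at t)
             \<and> D + E \<le> exp (\<beta> t) * (f (X t) - f x) * (deriv \<beta> t - exp (\<alpha> t))"
proof -
  have f_deriv: "(f has_derivative (\<lambda>v. inner (gf y) v)) (at y within S)" if "y \<in> S" for y
    using f(2) that by (simp add: C1_grad_on_def)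
  have h_deriv: "(h has_derivative (\<lambda>v. inner (gh (Z t)) v)) (at (Z t) within S)"
    using h ZS by (simp add: C1_grad_on_def)
  define D where "D = exp (\<alpha> t + \<beta> t) * inner (gf (X t)) (x - Z t)"
  have D: "((\<lambda>s. bregman h gh x (Z s)) has_real_derivative D) (at t)"
    using has_real_derivative_bregman_comp[OF h_deriv _ Z_diff[rule_format] ghZ[rule_format], of x]
      ZS by (auto simp: D_def)
  have fX: "((\<lambda>s. f (X s)) has_real_derivative inner (gf (X t)) (X' t)) (at t)"
    by (rule has_real_derivative_comp_gradient[OF f_deriv]) (use XS X_deriv in auto)
  have \<beta>: "(\<beta> has_real_derivative deriv \<beta> t) (at t)"
    using \<beta>_diff DERIV_deriv_iff_real_differentiable by blast
  define E where "E = exp (\<beta> t) * deriv \<beta> t * (f (X t) - f x) + exp (\<beta> t) * inner (gf (X t)) (X' t)"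
  have E: "((\<lambda>s. exp (\<beta> s) * (f (X s) - f x)) has_real_derivative E) (at t)"
    unfolding E_def by (auto intro!: derivative_eq_intros \<beta> fX simp: algebra_simps)
  have X': "X' t = exp (\<alpha> t) *\<^sub>R (Z t - X t)"
    using Z_def by (simp add: exp_minus)
  have "D + E = exp (\<alpha> t + \<beta> t) * inner (gf (X t)) (x - X t)
                + exp (\<beta> t) * deriv \<beta> t * (f (X t) - f x)"
    unfolding D_def E_def X' by (simp add: inner_diff_right exp_add algebra_simps)
  also have "\<dots> \<le> exp (\<alpha> t + \<beta> t) * (f x - f (X t)) + exp (\<beta> t) * deriv \<beta> t * (f (X t) - f x)"
    using convex_on_gradient_inequality[OF S f(1) f_deriv] XS x by simp
  also have "\<dots> = exp (\<beta> t) * (f (X t) - f x) * (deriv \<beta> t - exp (\<alpha> t))"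
    by (simp add: exp_add algebra_simps)
  finally show ?thesis
    using D E by blast
qed

lemma lyapunov_nonincreasing:
  assumes x: "x \<in> S"
    and sign: "\<forall>t. exp (\<beta> t) * (f (X t) - f x) * (deriv \<beta> t - exp (\<alpha> t)) \<le> 0"
  shows "(\<forall>t. \<exists>D E. ((\<lambda>s. bregman h gh x (Z s)) has_real_derivative D) (at t)
                 \<and> ((\<lambda>s. exp (\<beta> s) * (f (X s) - f x)) has_real_derivative E) (at t)
                 \<and> D \<le> - E)
         \<and> antimono (\<lambda>t. bregman h gh x (Z t) + exp (\<beta> t) * (f (X t) - f x))"
proof -
  have derivatives: "\<exists>D E. ((\<lambda>s. bregman h gh x (Z s)) has_real_derivative D) (at t)
                 \<and> ((\<lambda>s. exp (\<beta> s) * (f (X s) - f x)) has_real_derivative E) (at t)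
                 \<and> D \<le> - E" for t
  proof -
    obtain D E where "((\<lambda>s. bregman h gh x (Z s)) has_real_derivative D) (at t)"
      "((\<lambda>s. exp (\<beta> s) * (f (X s) - f x)) has_real_derivative E) (at t)"
      "D + E \<le> exp (\<beta> t) * (f (X t) - f x) * (deriv \<beta> t - exp (\<alpha> t))"
      using lyapunov_derivative_bound[OF x] by blast
    moreover from this(3) have "D \<le> - E"
      using sign[rule_format, of t] by linarith
    ultimately show ?thesis
      by blast
  qed
  have "\<exists>D. ((\<lambda>t. bregman h gh x (Z t) + exp (\<beta> t) * (f (X t) - f x)) has_real_derivative D) (at t)
            \<and> D \<le> 0" for t
    using derivatives[of t] by (force intro: DERIV_add)
  then have "antimono (\<lambda>t. bregman h gh x (Z t) + exp (\<beta> t) * (f (X t) - f x))"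
    by (rule antimono_if_derivative_nonpos)
  with derivatives show ?thesis
    by blast
qed

end

theorem proposition2:
  fixes S :: "'a::euclidean_space set"
    and f h :: "'a \<Rightarrow> real" and gf gh :: "'a \<Rightarrow> 'a"
    and xstar :: 'a
    and \<alpha> \<beta> :: "real \<Rightarrow> real"
    and X X' Z :: "real \<Rightarrow> 'a"
  assumes S: "closed S" "convex S"
    and f: "convex_on S f" "C1_grad_on S f gf"
    and xstar: "xstar \<in> S" "\<forall>y\<in>S. f xstar \<le> f y"
    and h: "strictly_convex_on S h" "C1_grad_on S h gh"
    and ab: "smooth_real \<alpha>" "smooth_real \<beta>" "mono \<beta>" "\<forall>t. deriv \<beta> t \<le> exp (\<alpha> t)"
    and Xdiff: "\<forall>t. (X has_vector_derivative X' t) (at t)"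
    and XS: "\<forall>t. X t \<in> S"
    and Zdef: "\<forall>t. Z t = X t + exp (- \<alpha> t) *\<^sub>R X' t"
    and ZS: "\<forall>t. Z t \<in> S"
    and Zdiff: "\<forall>t. Z differentiable (at t)"
    and ghZ: "\<forall>t. ((\<lambda>s. gh (Z s)) has_vector_derivative
                   (- exp (\<alpha> t + \<beta> t)) *\<^sub>R gf (X t)) (at t)"
  shows "(\<forall>t. \<exists>D E. ((\<lambda>s. bregman h gh xstar (Z s)) has_real_derivative D) (at t)
               \<and> ((\<lambda>s. exp (\<beta> s) * (f (X s) - f xstar)) has_real_derivative E) (at t)
               \<and> D \<le> - E)
       \<and> antimono (\<lambda>t. bregman h gh xstar (Z t) + exp (\<beta> t) * (f (X t) - f xstar))
       \<and> ((\<forall>t. deriv \<beta> t = exp (\<alpha> t)) \<longrightarrow>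
            (\<forall>x\<in>S.
              (\<forall>t. \<exists>D E. ((\<lambda>s. bregman h gh x (Z s)) has_real_derivative D) (at t)
                   \<and> ((\<lambda>s. exp (\<beta> s) * (f (X s) - f x)) has_real_derivative E) (at t)
                   \<and> D \<le> - E)
              \<and> antimono (\<lambda>t. bregman h gh x (Z t) + exp (\<beta> t) * (f (X t) - f x))))"
proof -
  have "\<forall>t. \<beta> differentiable (at t)"
    using ab(2) unfolding smooth_real_def by (metis funpow_0)
  note nonincreasing = lyapunov_nonincreasing[OF S(2) f h(2) this Xdiff XS Zdef ZS Zdiff ghZ]
  have "\<forall>t. exp (\<beta> t) * (f (X t) - f xstar) * (deriv \<beta> t - exp (\<alpha> t)) \<le> 0"
    using xstar(2) XS ab(4) by (simp add: mult_nonneg_nonpos)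
  then show ?thesis
    using nonincreasing[OF xstar(1)] nonincreasing by simp
qed

end
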